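(* Let $\{S_{\mathbf a^{[k]}},\,k\ge0\}$ and $\{S_{\mathbf a^{*[k]}},\,k\ge0\}$ be two local subdivision schemes which both reproduce constants, with difference schemes $\{S_{\mathbf q^{[k]}},\,k\ge0\}$ and $\{S_{\mathbf q^{*[k]}},\,k\ge0\}$. Then the following are equivalent: (i) $\lim_{k\to\infty}\|\mathbf a^{[k]}-\mathbf a^{*[k]}\|=0$ (the schemes are asymptotically similar); (ii) $\lim_{k\to\infty}\|\mathbf q^{[k]}-\mathbf q^{*[k]}\|=0$. If in addition one of the two schemes is bounded (i.e. $\sup_k\|S_{\mathbf a^{[k]}}\|<\infty$ or $\sup_k\|S_{\mathbf a^{*[k]}}\|<\infty$), then (i) is also equivalent to: (iii) for every fixed integer $p\ge0$, $\lim_{k\to\infty}\|S_{\mathbf q^{[k+p]}}\cdots S_{\mathbf q^{[k]}}-S_{\mathbf q^{*[k+p]}}\cdots S_{\mathbf q^{*[k]}}\|=0$.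
   Context: A subdivision scheme $\{S_{\mathbf a^{[k]}},\,k\ge0\}$ is given by finitely supported masks $\mathbf a^{[k]}=\{a^{[k]}_i\}_{i\in\mathbb Z}$ and operators $(S_{\mathbf a^{[k]}}\mathbf f)_i=\sum_{j\in\mathbb Z}a^{[k]}_{i-2j}f_j$ on $\mathbf f\in\mathbb R^{\mathbb Z}$. Local means: there is a positive integer $N$ with all masks supported in $[-N,N]$. Norms are sup-norms: $\|\mathbf a\|=\sup_i|a_i|$ for masks/sequences, and $\|S_{\mathbf a}\|=\max(\sum_i|a_{2i}|,\sum_i|a_{2i+1}|)$ for operators (operator sup-norm). The scheme reproduces constants if $\sum_ia^{[k]}_{2i}=\sum_ia^{[k]}_{2i+1}=1$ for all $k$; then its difference scheme has masks $q^{[k]}_i=\sum_{j\le i}(-1)^{i-j}a^{[k]}_j$ (equivalently, symbols satisfy $a^{[k]}(z)=(1+z)q^{[k]}(z)$ where $a(z)=\sum_ia_iz^i$). *)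

theory Defs
  imports "HOL-Analysis.Analysis"
begin

type_synonym mask = "int \<Rightarrow> real"
type_synonym seq = "int \<Rightarrow> real"
type_synonym scheme = "nat \<Rightarrow> mask"

definition local_scheme :: "scheme \<Rightarrow> bool" where
  "local_scheme a \<longleftrightarrow> (\<exists>N::int. N > 0 \<and> (\<forall>k i. \<bar>i\<bar> > N \<longrightarrow> a k i = 0))"

(* sums of finitely supported sequences: summing over the (finite) support *)
definition even_sum :: "mask \<Rightarrow> real" where
  "even_sum a = (\<Sum>i\<in>{i. a (2*i) \<noteq> 0}. a (2*i))"

definition odd_sum :: "mask \<Rightarrow> real" where
  "odd_sum a = (\<Sum>i\<in>{i. a (2*i+1) \<noteq> 0}. a (2*i+1))"

definition reproduces_constants :: "scheme \<Rightarrow> bool" where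
  "reproduces_constants a \<longleftrightarrow> (\<forall>k. even_sum (a k) = 1 \<and> odd_sum (a k) = 1)"

definition subdiv :: "mask \<Rightarrow> seq \<Rightarrow> seq" where
  "subdiv a f = (\<lambda>i. \<Sum>j\<in>{j. a (i - 2*j) \<noteq> 0}. a (i - 2*j) * f j)"

definition diff_mask :: "mask \<Rightarrow> mask" where
  "diff_mask a = (\<lambda>i. \<Sum>j\<in>{j. j \<le> i \<and> a j \<noteq> 0}. (-1) ^ nat (i - j) * a j)"

definition sup_norm :: "seq \<Rightarrow> real" where
  "sup_norm f = (SUP i. \<bar>f i\<bar>)"

(* operator sup-norm of a subdivision operator, by the explicit formula *)
definition subdiv_norm :: "mask \<Rightarrow> real" where
  "subdiv_norm a = max (\<Sum>i\<in>{i. a (2*i) \<noteq> 0}. \<bar>a (2*i)\<bar>)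
                       (\<Sum>i\<in>{i. a (2*i+1) \<noteq> 0}. \<bar>a (2*i+1)\<bar>)"

definition op_norm :: "(seq \<Rightarrow> seq) \<Rightarrow> real" where
  "op_norm T = (SUP f\<in>{f. bdd_above (range (\<lambda>i. \<bar>f i\<bar>)) \<and> sup_norm f \<le> 1}. sup_norm (T f))"

definition bounded_scheme :: "scheme \<Rightarrow> bool" where
  "bounded_scheme a \<longleftrightarrow> bdd_above (range (\<lambda>k. subdiv_norm (a k)))"

fun subdiv_prod :: "scheme \<Rightarrow> nat \<Rightarrow> nat \<Rightarrow> seq \<Rightarrow> seq" where
  "subdiv_prod a k 0 = subdiv (a k)"
| "subdiv_prod a k (Suc p) = subdiv (a (k + Suc p)) \<circ> subdiv_prod a k p"

end

(* Since a(z) = (1 + z) q(z), each entry of a is the sum of two neighbouring entries of q, and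
   each entry of q is an alternating sum of at most 2N + 1 entries of a; hence
   |a - a*| <= 2 |q - q*| and |q - q*| <= (2N + 1) |a - a*|.  Equal even and odd sums (which is
   what reproduction of constants gives) make q again supported in [-N, N].
   For (iii), telescoping bounds the difference of the (p+1)-fold products by B^p times the sum of
   the norms of S_{q^[k+m]} - S_{q*^[k+m]}, m <= p, where B bounds all difference operators
   uniformly; such a B exists as soon as one of the schemes is bounded and q - q* tends to zero.
   Conversely, for p = 0 the operator applied to the unit impulse returns q - q*. *)

theory Submission
  imports Defs
begin

definition supported_in :: "int \<Rightarrow> mask \<Rightarrow> bool" where
  "supported_in N a \<longleftrightarrow> (\<forall>j. N < \<bar>j\<bar> \<longrightarrow> a j = 0)"

lemma supported_inD: "supported_in N a \<Longrightarrow> N < \<bar>j\<bar> \<Longrightarrow> a j = 0"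
  by (simp add: supported_in_def)

lemma supported_in_nonzero: "supported_in N a \<Longrightarrow> a j \<noteq> 0 \<Longrightarrow> j \<in> {-N..N}"
  unfolding supported_in_def by (metis abs_le_iff atLeastAtMost_iff minus_le_iff not_less)

lemma supported_in_diff:
  "supported_in N a \<Longrightarrow> supported_in N b \<Longrightarrow> supported_in N (\<lambda>j. a j - b j)"
  by (simp add: supported_in_def)

lemma supported_in_finite: "supported_in N a \<Longrightarrow> finite {j. a j \<noteq> 0}"
  by (rule finite_subset[of _ "{-N..N}"]) (auto dest: supported_in_nonzero)

lemma local_schemes_common_support:
  assumes "local_scheme a" "local_scheme b"
  obtains N where "0 \<le> N" "\<And>k. supported_in N (a k)" "\<And>k. supported_in N (b k)"
proof -
  obtain Na Nb :: int where "Na > 0" "\<forall>k i. \<bar>i\<bar> > Na \<longrightarrow> a k i = 0"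
    and "Nb > 0" "\<forall>k i. \<bar>i\<bar> > Nb \<longrightarrow> b k i = 0"
    using assms unfolding local_scheme_def by blast
  then show ?thesis
    by (intro that[of "max Na Nb"]) (auto simp: supported_in_def)
qed

lemma abs_le_sum_support:
  assumes "supported_in N d"
  shows "\<bar>d i\<bar> \<le> (\<Sum>j\<in>{-N..N}. \<bar>d j\<bar>)"
proof (cases "\<bar>i\<bar> \<le> N")
  case True
  then show ?thesis by (intro member_le_sum) auto
next
  case False
  then show ?thesis using supported_inD[OF assms, of i] by (simp add: sum_nonneg)
qed

lemma sup_norm_upper:
  assumes "\<And>i. \<bar>f i\<bar> \<le> M"
  shows "\<bar>f i\<bar> \<le> sup_norm f"
  unfolding sup_norm_def by (rule cSUP_upper) (auto intro: bdd_aboveI2 assms)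

lemma sup_norm_least:
  assumes "\<And>i. \<bar>f i\<bar> \<le> M"
  shows "sup_norm f \<le> M"
  unfolding sup_norm_def by (rule cSUP_least) (auto intro: assms)

lemma sup_norm_nonneg:
  assumes "\<And>i. \<bar>f i\<bar> \<le> M"
  shows "0 \<le> sup_norm f"
  using sup_norm_upper[of f M 0] assms by fastforce

lemma supported_in_abs_le_sup_norm: "supported_in N d \<Longrightarrow> \<bar>d i\<bar> \<le> sup_norm d"
  by (rule sup_norm_upper) (rule abs_le_sum_support)

lemma supported_in_sup_norm_nonneg: "supported_in N d \<Longrightarrow> 0 \<le> sup_norm d"
  by (rule sup_norm_nonneg) (rule abs_le_sum_support)

lemma sum_support_le_sup_norm:
  assumes "0 \<le> N" "supported_in N d"
  shows "(\<Sum>j\<in>{-N..N}. \<bar>d j\<bar>) \<le> (2*N+1) * sup_norm d"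
proof -
  have "(\<Sum>j\<in>{-N..N}. \<bar>d j\<bar>) \<le> (\<Sum>j\<in>{-N..N}. sup_norm d)"
    by (intro sum_mono sup_norm_upper) (rule abs_le_sum_support[OF assms(2)])
  then show ?thesis using assms(1) by simp
qed

lemma diff_mask_eq_sum:
  assumes "supported_in N a"
  shows "diff_mask a i = (\<Sum>j\<in>{-N..i}. (-1) ^ nat (i - j) * a j)"
  unfolding diff_mask_def
  by (rule sum.mono_neutral_left) (auto dest: supported_in_nonzero[OF assms])

lemma diff_mask_below:
  assumes "supported_in N a" "i < -N"
  shows "diff_mask a i = 0"
  using diff_mask_eq_sum[OF assms(1)] assms(2) by simp

lemma diff_mask_diff:
  assumes "supported_in N a" "supported_in N b"
  shows "diff_mask (\<lambda>j. a j - b j) i = diff_mask a i - diff_mask b i"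
  using diff_mask_eq_sum[OF supported_in_diff[OF assms]] diff_mask_eq_sum[OF assms(1)]
    diff_mask_eq_sum[OF assms(2)]
  by (simp add: sum_subtractf right_diff_distrib)

lemma abs_diff_mask_le:
  assumes "supported_in N d"
  shows "\<bar>diff_mask d i\<bar> \<le> (\<Sum>j\<in>{-N..N}. \<bar>d j\<bar>)"
proof -
  have "\<bar>diff_mask d i\<bar> \<le> (\<Sum>j\<in>{-N..i}. \<bar>(-1) ^ nat (i - j) * d j\<bar>)"
    unfolding diff_mask_eq_sum[OF assms] by (rule sum_abs)
  also have "\<dots> = (\<Sum>j\<in>{-N..i}. \<bar>d j\<bar>)"
    by (simp add: abs_mult)
  also have "\<dots> = (\<Sum>j\<in>{-N..i} \<inter> {-N..N}. \<bar>d j\<bar>)"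
    by (rule sum.mono_neutral_right) (use supported_in_nonzero[OF assms] in force)+
  also have "\<dots> \<le> (\<Sum>j\<in>{-N..N}. \<bar>d j\<bar>)"
    by (rule sum_mono2) auto
  finally show ?thesis .
qed

lemma mask_eq_diff_mask_add:
  assumes "supported_in N a"
  shows "a i = diff_mask a i + diff_mask a (i - 1)"
proof (cases "i < -N")
  case True
  then show ?thesis
    using diff_mask_below[OF assms] supported_inD[OF assms, of i] by simp
next
  case False
  then have "{-N..i} = insert i {-N..i-1}" by auto
  then have "diff_mask a i = a i + (\<Sum>j\<in>{-N..i-1}. (-1) ^ nat (i - j) * a j)"
    by (simp add: diff_mask_eq_sum[OF assms])
  also have "(\<Sum>j\<in>{-N..i-1}. (-1) ^ nat (i - j) * a j) = - diff_mask a (i - 1)"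
    unfolding diff_mask_eq_sum[OF assms] sum_negf[symmetric]
  proof (rule sum.cong)
    fix j assume "j \<in> {-N..i-1}"
    then have "nat (i - j) = Suc (nat (i - 1 - j))" by auto
    then show "(-1) ^ nat (i - j) * a j = - ((-1) ^ nat (i - 1 - j) * a j)" by simp
  qed simp
  finally show ?thesis by simp
qed

lemma sum_support_parity_split:
  assumes "supported_in N a"
    and "\<And>j. a j = 0 \<Longrightarrow> h j = 0" and "\<And>j. a j = 0 \<Longrightarrow> g j = 0"
  shows "(\<Sum>j\<in>{-N..N}. if even j then h j else g j)
       = (\<Sum>m\<in>{m. a (2*m) \<noteq> 0}. h (2*m)) + (\<Sum>m\<in>{m. a (2*m+1) \<noteq> 0}. g (2*m+1))"
proof -
  have "(\<Sum>m\<in>{m. a (2*m) \<noteq> 0}. h (2*m)) = (\<Sum>j\<in>{j. a j \<noteq> 0 \<and> even j}. h j)"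
    by (rule sum.reindex_bij_witness[where i="\<lambda>j. j div 2" and j="\<lambda>m. 2*m"]) auto
  also have "\<dots> = (\<Sum>j\<in>{-N..N} \<inter> {j. even j}. h j)"
    by (rule sum.mono_neutral_left) (use supported_in_nonzero[OF assms(1)] assms(2) in force)+
  finally have even: "(\<Sum>m\<in>{m. a (2*m) \<noteq> 0}. h (2*m)) = (\<Sum>j\<in>{-N..N} \<inter> {j. even j}. h j)" .
  have "(\<Sum>m\<in>{m. a (2*m+1) \<noteq> 0}. g (2*m+1)) = (\<Sum>j\<in>{j. a j \<noteq> 0 \<and> odd j}. g j)"
    by (rule sum.reindex_bij_witness[where i="\<lambda>j. j div 2" and j="\<lambda>m. 2*m+1"]) auto
  also have "\<dots> = (\<Sum>j\<in>{-N..N} \<inter> - {j. even j}. g j)"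
    by (rule sum.mono_neutral_left) (use supported_in_nonzero[OF assms(1)] assms(3) in force)+
  finally have odd: "(\<Sum>m\<in>{m. a (2*m+1) \<noteq> 0}. g (2*m+1)) = (\<Sum>j\<in>{-N..N} \<inter> - {j. even j}. g j)" .
  show ?thesis unfolding even odd by (rule sum.If_cases) simp
qed

lemma alternating_sum_eq_even_sum_minus_odd_sum:
  assumes "supported_in N a"
  shows "(\<Sum>j\<in>{-N..N}. if even j then a j else - a j) = even_sum a - odd_sum a"
  unfolding even_sum_def odd_sum_def
  by (subst sum_support_parity_split[OF assms]) (auto simp: sum_negf)

lemma sum_abs_le_subdiv_norm:
  assumes "supported_in N a"
  shows "(\<Sum>j\<in>{-N..N}. \<bar>a j\<bar>) \<le> 2 * subdiv_norm a"
proof -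
  have "(\<Sum>j\<in>{-N..N}. \<bar>a j\<bar>) = (\<Sum>j\<in>{-N..N}. if even j then \<bar>a j\<bar> else \<bar>a j\<bar>)"
    by simp
  also have "\<dots> = (\<Sum>m\<in>{m. a (2*m) \<noteq> 0}. \<bar>a (2*m)\<bar>) + (\<Sum>m\<in>{m. a (2*m+1) \<noteq> 0}. \<bar>a (2*m+1)\<bar>)"
    by (rule sum_support_parity_split[OF assms]) auto
  finally show ?thesis unfolding subdiv_norm_def by linarith
qed

lemma diff_mask_above:
  assumes "supported_in N a" "even_sum a = odd_sum a" "N \<le> i"
  shows "diff_mask a i = 0"
proof -
  have "diff_mask a i = (\<Sum>j\<in>{-N..N}. (-1) ^ nat (i - j) * a j)"
    unfolding diff_mask_eq_sum[OF assms(1)]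
    by (rule sum.mono_neutral_right) (use supported_in_nonzero[OF assms(1)] assms(3) in force)+
  also have "\<dots> = (\<Sum>j\<in>{-N..N}. (if even i then 1 else -1) * (if even j then a j else - a j))"
    by (rule sum.cong) (use assms(3) in \<open>auto simp: even_nat_iff\<close>)
  also have "\<dots> = 0"
    by (simp add: sum_distrib_left[symmetric] alternating_sum_eq_even_sum_minus_odd_sum assms)
  finally show ?thesis .
qed

lemma supported_in_diff_mask:
  assumes "supported_in N a" "even_sum a = odd_sum a"
  shows "supported_in N (diff_mask a)"
  unfolding supported_in_def
  using diff_mask_below[OF assms(1)] diff_mask_above[OF assms]
  by (metis abs_le_iff linorder_not_le minus_le_iff order.strict_iff_not)

lemma abs_diff_mask_le_subdiv_norm:
  "supported_in N a \<Longrightarrow> \<bar>diff_mask a i\<bar> \<le> 2 * subdiv_norm a"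
  using abs_diff_mask_le sum_abs_le_subdiv_norm order_trans by blast

lemma sup_norm_diff_mask_le:
  assumes "0 \<le> N" "supported_in N d"
  shows "sup_norm (diff_mask d) \<le> (2*N+1) * sup_norm d"
  by (rule sup_norm_least)
    (rule order_trans[OF abs_diff_mask_le[OF assms(2)] sum_support_le_sup_norm[OF assms]])

lemma sup_norm_le_diff_mask:
  assumes "supported_in N d"
  shows "sup_norm d \<le> 2 * sup_norm (diff_mask d)"
proof (rule sup_norm_least)
  fix i
  have "\<bar>diff_mask d j\<bar> \<le> sup_norm (diff_mask d)" for j
    by (rule sup_norm_upper) (rule abs_diff_mask_le[OF assms])
  from this[of i] this[of "i - 1"] show "\<bar>d i\<bar> \<le> 2 * sup_norm (diff_mask d)"
    using mask_eq_diff_mask_add[OF assms, of i] by linarith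
qed

lemma LIMSEQ_zero_le_mult:
  fixes x y :: "nat \<Rightarrow> real"
  assumes "\<And>k. 0 \<le> x k" "\<And>k. x k \<le> c * y k" "y \<longlonglongrightarrow> 0"
  shows "x \<longlonglongrightarrow> 0"
proof (rule Lim_null_comparison)
  show "\<forall>\<^sub>F k in sequentially. norm (x k) \<le> c * y k"
    using assms(1,2) by simp
qed (rule tendsto_mult_right_zero[OF assms(3)])

lemma masks_tendsto_iff_diff_masks_tendsto:
  assumes "0 \<le> N" "\<And>k. supported_in N (a k)" "\<And>k. supported_in N (b k)"
  shows "(\<lambda>k. sup_norm (\<lambda>i. a k i - b k i)) \<longlonglongrightarrow> 0 \<longleftrightarrow>
         (\<lambda>k. sup_norm (\<lambda>i. diff_mask (a k) i - diff_mask (b k) i)) \<longlonglongrightarrow> 0"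
proof -
  have supp: "supported_in N (\<lambda>i. a k i - b k i)" for k
    by (rule supported_in_diff[OF assms(2,3)])
  have diff: "diff_mask (\<lambda>i. a k i - b k i) = (\<lambda>i. diff_mask (a k) i - diff_mask (b k) i)" for k
    using diff_mask_diff[OF assms(2,3)] by blast
  show ?thesis
    unfolding diff[symmetric]
  proof
    show "(\<lambda>k. sup_norm (diff_mask (\<lambda>i. a k i - b k i))) \<longlonglongrightarrow> 0"
      if "(\<lambda>k. sup_norm (\<lambda>i. a k i - b k i)) \<longlonglongrightarrow> 0"
      using sup_norm_nonneg[OF abs_diff_mask_le[OF supp]] sup_norm_diff_mask_le[OF assms(1) supp] that
      by (rule LIMSEQ_zero_le_mult)
    show "(\<lambda>k. sup_norm (\<lambda>i. a k i - b k i)) \<longlonglongrightarrow> 0"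
      if "(\<lambda>k. sup_norm (diff_mask (\<lambda>i. a k i - b k i))) \<longlonglongrightarrow> 0"
      using supported_in_sup_norm_nonneg[OF supp] sup_norm_le_diff_mask[OF supp] that
      by (rule LIMSEQ_zero_le_mult)
  qed
qed

lemma finite_shifted_support:
  assumes "finite {i. a i \<noteq> 0}"
  shows "finite {j::int. a (i - 2*j) \<noteq> (0::real)}"
proof -
  have "{j. a (i - 2*j) \<noteq> 0} = (\<lambda>j. i - 2*j) -` {i. a i \<noteq> 0}" by auto
  moreover have "inj (\<lambda>j::int. i - 2*j)" by (auto simp: inj_def)
  ultimately show ?thesis using finite_vimageI assms by metis
qed

lemma subdiv_eq_sum_over:
  assumes "finite J" "{j. a (i - 2*j) \<noteq> 0} \<subseteq> J"
  shows "subdiv a f i = (\<Sum>j\<in>J. a (i - 2*j) * f j)"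
  unfolding subdiv_def using assms by (intro sum.mono_neutral_left) auto

lemma subdiv_diff: "subdiv a (\<lambda>j. g j - h j) i = subdiv a g i - subdiv a h i"
  by (simp add: subdiv_def right_diff_distrib sum_subtractf)

lemma subdiv_mask_diff:
  assumes "finite {i. a i \<noteq> 0}" "finite {i. b i \<noteq> 0}"
  shows "subdiv (\<lambda>m. a m - b m) g i = subdiv a g i - subdiv b g i"
proof -
  let ?J = "{j. a (i - 2*j) \<noteq> 0} \<union> {j. b (i - 2*j) \<noteq> 0}"
  have J: "finite ?J"
    using finite_shifted_support[OF assms(1)] finite_shifted_support[OF assms(2)] by simp
  show ?thesis
    by (subst (1 2 3) subdiv_eq_sum_over[OF J]) (auto simp: left_diff_distrib sum_subtractf)
qed

lemma subdiv_delta: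
  assumes "finite {i. a i \<noteq> 0}"
  shows "subdiv a (\<lambda>j. if j = 0 then 1 else 0) i = a i"
proof -
  have J: "finite (insert 0 {j. a (i - 2*j) \<noteq> 0})"
    using finite_shifted_support[OF assms] by simp
  show ?thesis
    by (subst subdiv_eq_sum_over[OF J]) (auto simp: if_distrib sum.delta[OF J] cong: if_cong)
qed

lemma subdiv_norm_nonneg: "0 \<le> subdiv_norm a"
  unfolding subdiv_norm_def by (simp add: sum_nonneg le_max_iff_disj)

lemma sum_abs_shifted_le_subdiv_norm:
  "(\<Sum>j\<in>{j. a (i - 2*j) \<noteq> 0}. \<bar>a (i - 2*j)\<bar>) \<le> subdiv_norm a"
proof (cases "even i")
  case True
  then obtain t where t: "i = 2*t" by blast
  have "(\<Sum>j\<in>{j. a (i - 2*j) \<noteq> 0}. \<bar>a (i - 2*j)\<bar>) = (\<Sum>m\<in>{m. a (2*m) \<noteq> 0}. \<bar>a (2*m)\<bar>)"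
    by (rule sum.reindex_bij_witness[where i="\<lambda>m. t - m" and j="\<lambda>j. t - j"])
      (auto simp: t algebra_simps)
  then show ?thesis unfolding subdiv_norm_def by simp
next
  case False
  then obtain t where t: "i = 2*t+1" using oddE by blast
  have "(\<Sum>j\<in>{j. a (i - 2*j) \<noteq> 0}. \<bar>a (i - 2*j)\<bar>) = (\<Sum>m\<in>{m. a (2*m+1) \<noteq> 0}. \<bar>a (2*m+1)\<bar>)"
    by (rule sum.reindex_bij_witness[where i="\<lambda>m. t - m" and j="\<lambda>j. t - j"])
      (auto simp: t algebra_simps)
  then show ?thesis unfolding subdiv_norm_def by simp
qed

lemma abs_subdiv_le:
  assumes "\<And>j. \<bar>g j\<bar> \<le> M"
  shows "\<bar>subdiv a g i\<bar> \<le> subdiv_norm a * M"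
proof -
  have "\<bar>subdiv a g i\<bar> \<le> (\<Sum>j\<in>{j. a (i - 2*j) \<noteq> 0}. \<bar>a (i - 2*j)\<bar> * M)"
    unfolding subdiv_def
    by (rule order_trans[OF sum_abs sum_mono]) (simp add: abs_mult assms mult_left_mono)
  also have "\<dots> \<le> subdiv_norm a * M"
    unfolding sum_distrib_right[symmetric]
    using assms[of 0] by (intro mult_right_mono sum_abs_shifted_le_subdiv_norm) linarith
  finally show ?thesis .
qed

lemma subdiv_norm_le:
  assumes "0 \<le> N" "supported_in N d" "\<And>i. \<bar>d i\<bar> \<le> M"
  shows "subdiv_norm d \<le> (2*N+1) * M"
proof -
  have "(\<Sum>i\<in>{i. d (2*i+c) \<noteq> 0}. \<bar>d (2*i+c)\<bar>) \<le> (2*N+1) * M" if "c = 0 \<or> c = 1" for c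
  proof -
    have "{i. d (2*i+c) \<noteq> 0} \<subseteq> {-N..N}"
      using supported_in_nonzero[OF assms(2)] that by fastforce
    then have "(\<Sum>i\<in>{i. d (2*i+c) \<noteq> 0}. \<bar>d (2*i+c)\<bar>) \<le> (\<Sum>i\<in>{-N..N}. \<bar>d (2*i+c)\<bar>)"
      by (rule sum_mono2[rotated]) auto
    also have "\<dots> \<le> (\<Sum>i\<in>{-N..N}. M)"
      by (rule sum_mono) (rule assms(3))
    finally show ?thesis using assms(1) by simp
  qed
  from this[of 0] this[of 1] show ?thesis unfolding subdiv_norm_def by simp
qed

lemma abs_subdiv_prod_le:
  assumes "\<And>k. subdiv_norm (q k) \<le> B" "\<And>j. \<bar>f j\<bar> \<le> M"
  shows "\<bar>subdiv_prod q k p f i\<bar> \<le> B ^ Suc p * M"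
proof (induction p arbitrary: i)
  case 0
  have "\<bar>subdiv (q k) f i\<bar> \<le> subdiv_norm (q k) * M"
    by (rule abs_subdiv_le[OF assms(2)])
  also have "\<dots> \<le> B * M"
    using assms(2)[of 0] by (intro mult_right_mono assms(1)) linarith
  finally show ?case by simp
next
  case (Suc p)
  have "\<bar>subdiv (q (k + Suc p)) (subdiv_prod q k p f) i\<bar>
      \<le> subdiv_norm (q (k + Suc p)) * (B ^ Suc p * M)"
    by (rule abs_subdiv_le) (rule Suc.IH)
  also have "\<dots> \<le> B * (B ^ Suc p * M)"
    using Suc.IH[of 0] by (intro mult_right_mono assms(1)) linarith
  finally show ?case by (simp add: mult.assoc)
qed

lemma abs_subdiv_prod_diff_le:
  assumes "\<And>k. finite {i. q k i \<noteq> 0}" "\<And>k. finite {i. q' k i \<noteq> 0}"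
    and "\<And>k. subdiv_norm (q k) \<le> B" "\<And>k. subdiv_norm (q' k) \<le> B"
    and "\<And>j. \<bar>f j\<bar> \<le> 1"
  shows "\<bar>subdiv_prod q k p f i - subdiv_prod q' k p f i\<bar>
           \<le> B ^ p * (\<Sum>m\<le>p. subdiv_norm (\<lambda>i. q (k + m) i - q' (k + m) i))"
proof (induction p arbitrary: i)
  case 0
  have "\<bar>subdiv (\<lambda>m. q k m - q' k m) f i\<bar> \<le> subdiv_norm (\<lambda>m. q k m - q' k m) * 1"
    by (rule abs_subdiv_le[OF assms(5)])
  then show ?case by (simp add: subdiv_mask_diff assms(1,2))
next
  case (Suc p)
  let ?\<delta> = "\<lambda>m. subdiv_norm (\<lambda>i. q (k + m) i - q' (k + m) i)"
  let ?g = "subdiv_prod q k p f" and ?g' = "subdiv_prod q' k p f"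
  let ?Q = "q (k + Suc p)" and ?Q' = "q' (k + Suc p)"
  have B: "0 \<le> B" using assms(3) subdiv_norm_nonneg order_trans by blast
  have "\<bar>subdiv ?Q (\<lambda>j. ?g j - ?g' j) i\<bar> \<le> subdiv_norm ?Q * (B ^ p * (\<Sum>m\<le>p. ?\<delta> m))"
    by (rule abs_subdiv_le) (rule Suc.IH)
  also have "\<dots> \<le> B ^ Suc p * (\<Sum>m\<le>p. ?\<delta> m)"
    using B by (simp add: mult_right_mono assms(3) sum_nonneg subdiv_norm_nonneg flip: mult.assoc)
  finally have new_factor: "\<bar>subdiv ?Q (\<lambda>j. ?g j - ?g' j) i\<bar> \<le> B ^ Suc p * (\<Sum>m\<le>p. ?\<delta> m)" .
  have "\<bar>subdiv (\<lambda>m. ?Q m - ?Q' m) ?g' i\<bar> \<le> ?\<delta> (Suc p) * (B ^ Suc p * 1)"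
    by (rule abs_subdiv_le, rule abs_subdiv_prod_le) (use assms(4,5) in auto)
  then have new_level: "\<bar>subdiv (\<lambda>m. ?Q m - ?Q' m) ?g' i\<bar> \<le> B ^ Suc p * ?\<delta> (Suc p)"
    by (simp add: mult.commute)
  have "subdiv_prod q k (Suc p) f i - subdiv_prod q' k (Suc p) f i
      = subdiv ?Q (\<lambda>j. ?g j - ?g' j) i + subdiv (\<lambda>m. ?Q m - ?Q' m) ?g' i"
    by (simp add: subdiv_diff subdiv_mask_diff assms(1,2))
  with new_factor new_level show ?case
    by (simp add: distrib_left)
qed

lemma bounded_sup_norm_le_one_iff:
  "bdd_above (range (\<lambda>i. \<bar>f i\<bar>)) \<and> sup_norm f \<le> 1 \<longleftrightarrow> (\<forall>j. \<bar>f j\<bar> \<le> 1)"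
proof
  assume f: "bdd_above (range (\<lambda>i. \<bar>f i\<bar>)) \<and> sup_norm f \<le> 1"
  then have "\<bar>f j\<bar> \<le> sup_norm f" for j
    unfolding sup_norm_def by (auto intro: cSUP_upper)
  with f show "\<forall>j. \<bar>f j\<bar> \<le> 1" by (auto intro: order_trans)
qed (auto intro: bdd_aboveI2 sup_norm_least)

lemma op_norm_le:
  fixes T :: "seq \<Rightarrow> seq"
  assumes "\<And>f i. (\<And>j. \<bar>f j\<bar> \<le> 1) \<Longrightarrow> \<bar>T f i\<bar> \<le> E"
  shows "op_norm T \<le> E"
  unfolding op_norm_def
proof (rule cSUP_least)
  show "{f. bdd_above (range (\<lambda>i. \<bar>f i\<bar>)) \<and> sup_norm f \<le> 1} \<noteq> {}"
    using bounded_sup_norm_le_one_iff[of "\<lambda>_. 0"] by auto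
next
  fix f assume "f \<in> {f. bdd_above (range (\<lambda>i. \<bar>f i\<bar>)) \<and> sup_norm f \<le> 1}"
  then show "sup_norm (T f) \<le> E"
    unfolding bounded_sup_norm_le_one_iff by (intro sup_norm_least assms) auto
qed

lemma sup_norm_le_op_norm:
  fixes T :: "seq \<Rightarrow> seq"
  assumes "\<And>f i. (\<And>j. \<bar>f j\<bar> \<le> 1) \<Longrightarrow> \<bar>T f i\<bar> \<le> E" and "\<And>j. \<bar>f j\<bar> \<le> 1"
  shows "sup_norm (T f) \<le> op_norm T"
  unfolding op_norm_def
proof (rule cSUP_upper)
  show "f \<in> {f. bdd_above (range (\<lambda>i. \<bar>f i\<bar>)) \<and> sup_norm f \<le> 1}"
    using assms(2) by (simp add: bounded_sup_norm_le_one_iff)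
  show "bdd_above ((\<lambda>f. sup_norm (T f)) ` {f. bdd_above (range (\<lambda>i. \<bar>f i\<bar>)) \<and> sup_norm f \<le> 1})"
    by (rule bdd_aboveI2[where M=E]) (auto simp: bounded_sup_norm_le_one_iff intro: sup_norm_least assms(1))
qed

lemma op_norm_nonneg:
  fixes T :: "seq \<Rightarrow> seq"
  assumes "\<And>f i. (\<And>j. \<bar>f j\<bar> \<le> 1) \<Longrightarrow> \<bar>T f i\<bar> \<le> E"
  shows "0 \<le> op_norm T"
proof -
  have "0 \<le> sup_norm (T (\<lambda>_. 0))"
    by (rule sup_norm_nonneg, rule assms) simp
  also have "\<dots> \<le> op_norm T"
    by (rule sup_norm_le_op_norm[where T=T, OF assms]) auto
  finally show ?thesis .
qed

lemma op_norm_subdiv_prod_diff_tendsto_zero: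
  assumes "\<And>k. finite {i. q k i \<noteq> 0}" "\<And>k. finite {i. q' k i \<noteq> 0}"
    and "\<And>k. subdiv_norm (q k) \<le> B" "\<And>k. subdiv_norm (q' k) \<le> B"
    and "(\<lambda>k. subdiv_norm (\<lambda>i. q k i - q' k i)) \<longlonglongrightarrow> 0"
  shows "(\<lambda>k. op_norm (\<lambda>f i. subdiv_prod q k p f i - subdiv_prod q' k p f i)) \<longlonglongrightarrow> 0"
proof (rule LIMSEQ_zero_le_mult)
  note bound = abs_subdiv_prod_diff_le[OF assms(1-4)]
  show "0 \<le> op_norm (\<lambda>f i. subdiv_prod q k p f i - subdiv_prod q' k p f i)" for k
    by (rule op_norm_nonneg) (rule bound)
  show "op_norm (\<lambda>f i. subdiv_prod q k p f i - subdiv_prod q' k p f i)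
      \<le> B ^ p * (\<Sum>m\<le>p. subdiv_norm (\<lambda>i. q (k + m) i - q' (k + m) i))" for k
    by (rule op_norm_le) (rule bound)
  show "(\<lambda>k. \<Sum>m\<le>p. subdiv_norm (\<lambda>i. q (k + m) i - q' (k + m) i)) \<longlonglongrightarrow> 0"
    by (intro tendsto_null_sum LIMSEQ_ignore_initial_segment assms(5))
qed

lemma sup_norm_diff_le_op_norm_subdiv_diff:
  assumes "finite {i. a i \<noteq> 0}" "finite {i. b i \<noteq> 0}"
  shows "sup_norm (\<lambda>i. a i - b i) \<le> op_norm (\<lambda>f i. subdiv a f i - subdiv b f i)"
proof -
  have bound: "\<bar>subdiv a f i - subdiv b f i\<bar> \<le> subdiv_norm a * 1 + subdiv_norm b * 1"
    if "\<And>j. \<bar>f j\<bar> \<le> 1" for f :: seq and i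
  proof -
    have "\<bar>subdiv a f i\<bar> \<le> subdiv_norm a * 1" "\<bar>subdiv b f i\<bar> \<le> subdiv_norm b * 1"
      by (rule abs_subdiv_le, rule that)+
    then show ?thesis by linarith
  qed
  from sup_norm_le_op_norm[where T="\<lambda>f i. subdiv a f i - subdiv b f i", OF bound,
      where f="\<lambda>j. if j = 0 then 1 else 0"]
  show ?thesis by (simp add: subdiv_delta assms)
qed

lemma sup_norm_diff_tendsto_zero_if_op_norm_tendsto:
  assumes "\<And>k. supported_in N (q k)" "\<And>k. supported_in N (q' k)"
    and "(\<lambda>k. op_norm (\<lambda>f i. subdiv (q k) f i - subdiv (q' k) f i)) \<longlonglongrightarrow> 0"
  shows "(\<lambda>k. sup_norm (\<lambda>i. q k i - q' k i)) \<longlonglongrightarrow> 0"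
  using supported_in_sup_norm_nonneg[OF supported_in_diff[OF assms(1,2)]] _ assms(3)
proof (rule LIMSEQ_zero_le_mult)
  show "sup_norm (\<lambda>i. q k i - q' k i) \<le> 1 * op_norm (\<lambda>f i. subdiv (q k) f i - subdiv (q' k) f i)"
    for k
    using sup_norm_diff_le_op_norm_subdiv_diff[OF supported_in_finite[OF assms(1)[of k]]
        supported_in_finite[OF assms(2)[of k]]] by simp
qed

lemma bounded_scheme_diff_mask_bounded:
  assumes "\<And>k. supported_in N (a k)" "bounded_scheme a"
  shows "\<exists>B. \<forall>k i. \<bar>diff_mask (a k) i\<bar> \<le> B"
proof -
  obtain C where C: "\<And>k. subdiv_norm (a k) \<le> C"
    using assms(2) unfolding bounded_scheme_def bdd_above_def by blast
  have "\<bar>diff_mask (a k) i\<bar> \<le> 2 * C" for k i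
  proof -
    have "\<bar>diff_mask (a k) i\<bar> \<le> 2 * subdiv_norm (a k)"
      by (rule abs_diff_mask_le_subdiv_norm[OF assms(1)])
    also have "\<dots> \<le> 2 * C"
      using C by simp
    finally show ?thesis .
  qed
  then show ?thesis by blast
qed

lemma op_norm_subdiv_prod_diff_tendsto_zero_if_masks_tendsto:
  assumes "0 \<le> N" "\<And>k. supported_in N (q k)" "\<And>k. supported_in N (q' k)"
    and "(\<forall>k i. \<bar>q k i\<bar> \<le> B) \<or> (\<forall>k i. \<bar>q' k i\<bar> \<le> B)"
    and "(\<lambda>k. sup_norm (\<lambda>i. q k i - q' k i)) \<longlonglongrightarrow> 0"
  shows "(\<lambda>k. op_norm (\<lambda>f i. subdiv_prod q k p f i - subdiv_prod q' k p f i)) \<longlonglongrightarrow> 0"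
proof -
  define Y where "Y k = sup_norm (\<lambda>i. q k i - q' k i)" for k
  have supp: "supported_in N (\<lambda>i. q k i - q' k i)" for k
    by (rule supported_in_diff[OF assms(2,3)])
  have Y: "\<bar>q k i - q' k i\<bar> \<le> Y k" for k i
    unfolding Y_def by (rule supported_in_abs_le_sup_norm[OF supp])
  have "Bseq Y"
    unfolding Y_def by (rule convergent_imp_Bseq[OF convergentI[OF assms(5)]])
  then obtain K where K: "\<And>k. Y k \<le> K"
    by (auto simp: Bseq_def dest: abs_le_D1)
  have Y_nonneg: "0 \<le> Y k" for k
    unfolding Y_def by (rule supported_in_sup_norm_nonneg[OF supp])
  have bound: "\<bar>q k i\<bar> \<le> B + K" "\<bar>q' k i\<bar> \<le> B + K" for k i
    using assms(4) Y[of k i] Y_nonneg[of k] K[of k] by (auto dest!: spec[of _ k] spec[of _ i])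
  have "(\<lambda>k. subdiv_norm (\<lambda>i. q k i - q' k i)) \<longlonglongrightarrow> 0"
    using subdiv_norm_nonneg subdiv_norm_le[OF assms(1) supp Y] assms(5)[folded Y_def]
    by (rule LIMSEQ_zero_le_mult)
  then show ?thesis
    using supported_in_finite[OF assms(2)] supported_in_finite[OF assms(3)]
      subdiv_norm_le[OF assms(1,2) bound(1)] subdiv_norm_le[OF assms(1,3) bound(2)]
    by (rule op_norm_subdiv_prod_diff_tendsto_zero[rotated 4])
qed

theorem proposition8:
  fixes a a' :: scheme
  assumes "local_scheme a" and "local_scheme a'"
    and "reproduces_constants a" and "reproduces_constants a'"
  defines "q \<equiv> (\<lambda>k. diff_mask (a k))" and "q' \<equiv> (\<lambda>k. diff_mask (a' k))"
  shows "(((\<lambda>k. sup_norm (\<lambda>i. a k i - a' k i)) \<longlonglongrightarrow> 0) \<longleftrightarrow>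
           ((\<lambda>k. sup_norm (\<lambda>i. q k i - q' k i)) \<longlonglongrightarrow> 0)) \<and>
         ((bounded_scheme a \<or> bounded_scheme a') \<longrightarrow>
         (((\<lambda>k. sup_norm (\<lambda>i. a k i - a' k i)) \<longlonglongrightarrow> 0) \<longleftrightarrow>
         (\<forall>p::nat. (\<lambda>k. op_norm (\<lambda>f i. subdiv_prod q k p f i - subdiv_prod q' k p f i))
                     \<longlonglongrightarrow> 0)))"
proof -
  obtain N where N: "0 \<le> N" "\<And>k. supported_in N (a k)" "\<And>k. supported_in N (a' k)"
    using local_schemes_common_support[OF assms(1,2)] by blast
  have q: "supported_in N (q k)" "supported_in N (q' k)" for k
    using assms(3,4) unfolding q_def q'_def reproduces_constants_def
    by (simp_all add: supported_in_diff_mask N)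
  have i_ii: "(\<lambda>k. sup_norm (\<lambda>i. a k i - a' k i)) \<longlonglongrightarrow> 0 \<longleftrightarrow>
              (\<lambda>k. sup_norm (\<lambda>i. q k i - q' k i)) \<longlonglongrightarrow> 0"
    unfolding q_def q'_def by (rule masks_tendsto_iff_diff_masks_tendsto[OF N])
  have iii_ii: "(\<lambda>k. sup_norm (\<lambda>i. q k i - q' k i)) \<longlonglongrightarrow> 0"
    if "(\<lambda>k. op_norm (\<lambda>f i. subdiv_prod q k 0 f i - subdiv_prod q' k 0 f i)) \<longlonglongrightarrow> 0"
    using that by (intro sup_norm_diff_tendsto_zero_if_op_norm_tendsto[where q=q and q'=q', OF q]) simp
  have ii_iii: "\<forall>p. (\<lambda>k. op_norm (\<lambda>f i. subdiv_prod q k p f i - subdiv_prod q' k p f i)) \<longlonglongrightarrow> 0"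
    if bounded: "bounded_scheme a \<or> bounded_scheme a'"
      and lim: "(\<lambda>k. sup_norm (\<lambda>i. q k i - q' k i)) \<longlonglongrightarrow> 0"
  proof -
    obtain B where "(\<forall>k i. \<bar>q k i\<bar> \<le> B) \<or> (\<forall>k i. \<bar>q' k i\<bar> \<le> B)"
      using bounded bounded_scheme_diff_mask_bounded[where a=a, OF N(2)]
        bounded_scheme_diff_mask_bounded[where a=a', OF N(3)]
      unfolding q_def q'_def by blast
    then show ?thesis
      using op_norm_subdiv_prod_diff_tendsto_zero_if_masks_tendsto[OF N(1) q _ lim] by blast
  qed
  show ?thesis
    using i_ii iii_ii ii_iii by blast
qed

end
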